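(* Let $(p_0,\dots,p_{n-1})$ be a closed discrete curve with $l_k=l_0$ and $\theta_k=\theta_0\in(-\pi,\pi)$ for all $k$, and let $\kappa=2\tan(\theta_0/2)/l_0$ (so the curve is an equilibrium of $L+\kappa\mathrm{Vol}$). Let $p(t)$, $t\in(-\varepsilon,\varepsilon)$, be a $C^2$ family of closed discrete curves with $p(0)=p$, $\mathrm{Vol}(p(t))$ constant, and $p_k'(0)=\psi_kN_k+\eta_kT_k$ for real $\psi_k,\eta_k$. Then \[ \frac{d^2}{dt^2}\Big|_{t=0}L(p(t))=\sum_k\Big[|\nabla\psi_k|^2-\kappa^2\psi_k\psi_{k+1}+\tan^2\frac{\theta_0}{2}\Big(\kappa\,\nabla\psi_k(\eta_{k+1}+\eta_k)+|\nabla\eta_k|^2\Big)\Big]l_0 . \] In particular, if $\eta_k=0$ for all $k$ (normal variation), then \[ \frac{d^2}{dt^2}\Big|_{t=0}L(p(t))=\sum_k\big(|\nabla\psi_k|^2-\kappa^2\psi_k\psi_{k+1}\big)l_0=-\sum_k\psi_k\big(\Delta\psi_k+\kappa^2\psi_{k+1}\big)l_0 . \]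
   Context: A closed discrete curve is an $n$-tuple $(p_0,\dots,p_{n-1})$ of points of $\mathbb{R}^2$ ($n\ge3$), indices modulo $n$, with $l_k:=|p_{k+1}-p_k|\ne0$ for all $k$. $R_\varphi$ denotes rotation of $\mathbb{R}^2$ by $\varphi$. Fix $R\in\{R_{\pi/2},R_{-\pi/2}\}$ and set $\sigma=+1$ if $R=R_{\pi/2}$, $\sigma=-1$ if $R=R_{-\pi/2}$. Edge normal $\nu_k:=R((p_{k+1}-p_k)/l_k)$. The signed angle $\theta_k\in(-\pi,\pi]$ at vertex $p_k$ is defined by $\nu_k=R_{\sigma\theta_k}\nu_{k-1}$. When $\theta_k\ne\pi$, the vertex normal is $N_k:=\dfrac{\nu_k+\nu_{k-1}}{1+\cos\theta_k}$ and the vertex tangent is $T_k:=-RN_k$. Length $L=\sum_k l_k$, area $\mathrm{Vol}=\frac12\sum_k\langle p_k,\nu_k\rangle l_k$. Discrete gradient $\nabla\psi_k:=(\psi_{k+1}-\psi_k)/l_0$ and discrete Laplacian $\Delta\psi_k:=(\nabla\psi_k-\nabla\psi_{k-1})/l_0=(\psi_{k+1}-2\psi_k+\psi_{k-1})/l_0^2$. *)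

theory Defs
  imports "HOL-Analysis.Analysis"
begin

(* Points of R^2 are real^2; a closed discrete curve with n points is p :: nat => real^2,
   only the values p 0 .. p (n-1) matter; all indices are read modulo n. *)

definition rot :: "real \<Rightarrow> real^2 \<Rightarrow> real^2" where
  "rot \<phi> v = (\<chi> i. if i = 1 then cos \<phi> * v$1 - sin \<phi> * v$2 else sin \<phi> * v$1 + cos \<phi> * v$2)"

definition prev_idx :: "nat \<Rightarrow> nat \<Rightarrow> nat" where
  "prev_idx n k = (k + n - 1) mod n"

definition edge_len :: "(nat \<Rightarrow> real^2) \<Rightarrow> nat \<Rightarrow> nat \<Rightarrow> real" where
  "edge_len p n k = norm (p (Suc k mod n) - p (k mod n))"

definition closed_curve :: "nat \<Rightarrow> (nat \<Rightarrow> real^2) \<Rightarrow> bool" where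
  "closed_curve n p \<longleftrightarrow> n \<ge> 3 \<and> (\<forall>k<n. edge_len p n k \<noteq> 0)"

definition edge_normal :: "real \<Rightarrow> (nat \<Rightarrow> real^2) \<Rightarrow> nat \<Rightarrow> nat \<Rightarrow> real^2" where
  "edge_normal \<sigma> p n k = rot (\<sigma> * pi / 2) ((1 / edge_len p n k) *\<^sub>R (p (Suc k mod n) - p (k mod n)))"

definition signed_angle :: "real \<Rightarrow> (nat \<Rightarrow> real^2) \<Rightarrow> nat \<Rightarrow> nat \<Rightarrow> real" where
  "signed_angle \<sigma> p n k = (THE \<theta>. -pi < \<theta> \<and> \<theta> \<le> pi \<and>
      edge_normal \<sigma> p n (k mod n) = rot (\<sigma> * \<theta>) (edge_normal \<sigma> p n (prev_idx n k)))"

definition vertex_normal :: "real \<Rightarrow> (nat \<Rightarrow> real^2) \<Rightarrow> nat \<Rightarrow> nat \<Rightarrow> real^2" where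
  "vertex_normal \<sigma> p n k = (1 / (1 + cos (signed_angle \<sigma> p n k))) *\<^sub>R
      (edge_normal \<sigma> p n (k mod n) + edge_normal \<sigma> p n (prev_idx n k))"

definition vertex_tangent :: "real \<Rightarrow> (nat \<Rightarrow> real^2) \<Rightarrow> nat \<Rightarrow> nat \<Rightarrow> real^2" where
  "vertex_tangent \<sigma> p n k = - rot (\<sigma> * pi / 2) (vertex_normal \<sigma> p n k)"

definition curve_length :: "nat \<Rightarrow> (nat \<Rightarrow> real^2) \<Rightarrow> real" where
  "curve_length n p = (\<Sum>k<n. edge_len p n k)"

definition curve_vol :: "real \<Rightarrow> nat \<Rightarrow> (nat \<Rightarrow> real^2) \<Rightarrow> real" where
  "curve_vol \<sigma> n p = (1/2) * (\<Sum>k<n. (p k \<bullet> edge_normal \<sigma> p n k) * edge_len p n k)"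

definition dgrad :: "real \<Rightarrow> nat \<Rightarrow> (nat \<Rightarrow> real) \<Rightarrow> nat \<Rightarrow> real" where
  "dgrad l0 n \<psi> k = (\<psi> (Suc k mod n) - \<psi> (k mod n)) / l0"

definition dlap :: "real \<Rightarrow> nat \<Rightarrow> (nat \<Rightarrow> real) \<Rightarrow> nat \<Rightarrow> real" where
  "dlap l0 n \<psi> k = (dgrad l0 n \<psi> k - dgrad l0 n \<psi> (prev_idx n k)) / l0"

definition C2_family :: "real \<Rightarrow> nat \<Rightarrow> (real \<Rightarrow> nat \<Rightarrow> real^2) \<Rightarrow> bool" where
  "C2_family \<epsilon> n P \<longleftrightarrow> (\<forall>k<n. \<exists>D1 D2. \<forall>t\<in>{-\<epsilon><..<\<epsilon>}.
      ((\<lambda>s. P s k) has_vector_derivative D1 t) (at t) \<and>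
      (D1 has_vector_derivative D2 t) (at t) \<and> continuous_on {-\<epsilon><..<\<epsilon>} D2)"

end

theory Submission
  imports Defs
begin

text \<open>Write \<open>e\<^sub>k\<close> for the edges, \<open>w\<^sub>k\<close> and \<open>b\<^sub>k\<close> for their velocities and accelerations at
\<open>t = 0\<close>, and \<open>J\<close> for the quarter turn. The second variation of the length is
\<open>\<Sum> (\<bar>w\<^sub>k\<bar>\<^sup>2 + e\<^sub>k\<cdot>b\<^sub>k)/l\<^sub>0 - (e\<^sub>k\<cdot>w\<^sub>k)\<^sup>2/l\<^sub>0\<^sup>3\<close>, which involves the unknown accelerations.
On an equiangular polygon consecutive edges satisfy \<open>e\<^sub>k - e\<^sub>k\<^sub>-\<^sub>1 = \<tau> J (e\<^sub>k\<^sub>-\<^sub>1 + e\<^sub>k)\<close> with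
\<open>\<tau> = tan (\<theta>\<^sub>0/2)\<close>. Summing by parts with this relation turns \<open>\<Sum> e\<^sub>k\<cdot>b\<^sub>k\<close> into the acceleration
terms of the second variation of the area, which vanishes because the area is constant; what is
left is \<open>2\<tau> \<Sum> v\<^sub>k\<cdot>J w\<^sub>k\<close>, \<open>v\<^sub>k\<close> being the vertex velocities. Written in the orthonormal frame
\<open>(u\<^sub>k, J u\<^sub>k)\<close> of the edge direction \<open>u\<^sub>k\<close>, the resulting summand is the claimed one up to a telescoping multiple
of \<open>\<psi>\<^sub>k\<^sub>+\<^sub>1\<eta>\<^sub>k\<^sub>+\<^sub>1 - \<psi>\<^sub>k\<eta>\<^sub>k\<close>.\<close>

section \<open>Quarter turns of the plane\<close>

abbreviation quarter_rot :: "real \<Rightarrow> real^2 \<Rightarrow> real^2" where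
  "quarter_rot \<sigma> \<equiv> rot (\<sigma> * pi / 2)"

lemma inner_vec2: "(a::real^2) \<bullet> b = a$1 * b$1 + a$2 * b$2"
  by (simp add: inner_vec_def sum_2)

lemma vec2_eq_iff: "(a::real^2) = b \<longleftrightarrow> a$1 = b$1 \<and> a$2 = b$2"
  by (simp add: vec_eq_iff forall_2)

lemma rot_nth: "rot \<phi> v $ 1 = cos \<phi> * v$1 - sin \<phi> * v$2" "rot \<phi> v $ 2 = sin \<phi> * v$1 + cos \<phi> * v$2"
  by (simp_all add: rot_def)

lemma rot_add: "rot \<phi> (a + b) = rot \<phi> a + rot \<phi> b"
  and rot_diff: "rot \<phi> (a - b) = rot \<phi> a - rot \<phi> b"
  and rot_scaleR: "rot \<phi> (c *\<^sub>R a) = c *\<^sub>R rot \<phi> a"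
  by (simp_all add: vec2_eq_iff rot_nth algebra_simps)

lemma bounded_linear_rot: "bounded_linear (rot \<phi>)"
  using linear_conv_bounded_linear by (blast intro: linearI rot_add rot_scaleR)

lemma quarter_rot_nth:
  assumes "\<sigma> = 1 \<or> \<sigma> = -1"
  shows "quarter_rot \<sigma> v $ 1 = - \<sigma> * v$2" "quarter_rot \<sigma> v $ 2 = \<sigma> * v$1"
  using assms by (auto simp: rot_nth)

lemma quarter_rot_quarter_rot:
  assumes "\<sigma> = 1 \<or> \<sigma> = -1"
  shows "quarter_rot \<sigma> (quarter_rot \<sigma> v) = - v"
  unfolding vec2_eq_iff quarter_rot_nth[OF assms] using assms by auto

lemma inner_quarter_rot_self:
  assumes "\<sigma> = 1 \<or> \<sigma> = -1"
  shows "x \<bullet> quarter_rot \<sigma> x = 0" "quarter_rot \<sigma> x \<bullet> x = 0"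
  unfolding inner_vec2 quarter_rot_nth[OF assms] using assms by (auto simp: algebra_simps)

lemma inner_quarter_rot_quarter_rot:
  assumes "\<sigma> = 1 \<or> \<sigma> = -1"
  shows "quarter_rot \<sigma> x \<bullet> quarter_rot \<sigma> y = x \<bullet> y"
  unfolding inner_vec2 quarter_rot_nth[OF assms] using assms by (auto simp: algebra_simps)

lemma inner_quarter_rot_right:
  assumes "\<sigma> = 1 \<or> \<sigma> = -1"
  shows "x \<bullet> quarter_rot \<sigma> y = - (quarter_rot \<sigma> x \<bullet> y)"
  unfolding inner_vec2 quarter_rot_nth[OF assms] using assms by (auto simp: algebra_simps)

lemma rot_signed_angle:
  assumes "\<sigma> = 1 \<or> \<sigma> = -1"
  shows "rot (\<sigma> * \<theta>) v = cos \<theta> *\<^sub>R v + sin \<theta> *\<^sub>R quarter_rot \<sigma> v"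
  using assms by (auto simp: vec2_eq_iff rot_nth)

lemma quarter_rot_frame:
  assumes \<sigma>: "\<sigma> = 1 \<or> \<sigma> = -1" and "a \<bullet> a = 1"
  shows "b = (a \<bullet> b) *\<^sub>R a + (quarter_rot \<sigma> a \<bullet> b) *\<^sub>R quarter_rot \<sigma> a"
proof -
  have "a$1 * a$1 + a$2 * a$2 = 1" using assms(2) by (simp add: inner_vec2)
  moreover have "\<sigma> * \<sigma> = 1" using \<sigma> by auto
  ultimately show ?thesis
    unfolding vec2_eq_iff inner_vec2 by (simp add: quarter_rot_nth[OF \<sigma>]) algebra
qed

lemma ex1_rot_angle:
  fixes a b :: "real^2"
  assumes \<sigma>: "\<sigma> = 1 \<or> \<sigma> = -1" and a: "a \<bullet> a = 1" and b: "b \<bullet> b = 1"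
  shows "\<exists>!\<theta>. -pi < \<theta> \<and> \<theta> \<le> pi \<and> b = rot (\<sigma> * \<theta>) a"
proof -
  let ?J = "quarter_rot \<sigma>"
  define z where "z = Complex (a \<bullet> b) (?J a \<bullet> b)"
  have frame: "b = Re z *\<^sub>R a + Im z *\<^sub>R ?J a"
    unfolding z_def using quarter_rot_frame[OF \<sigma> a] by simp
  have "b \<bullet> b = (Re z)\<^sup>2 + (Im z)\<^sup>2"
    by (subst (1 2) frame) (simp add: inner_add_left inner_add_right a inner_quarter_rot_self[OF \<sigma>]
        inner_quarter_rot_quarter_rot[OF \<sigma>] inner_commute[of "?J a" a] power2_eq_square)
  then have "cmod z = 1" using b by (simp add: cmod_def)
  have rot_iff: "b = rot (\<sigma> * \<theta>) a \<longleftrightarrow> cis \<theta> = z" for \<theta>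
  proof
    assume "b = rot (\<sigma> * \<theta>) a"
    then have "b = cos \<theta> *\<^sub>R a + sin \<theta> *\<^sub>R ?J a" by (simp add: rot_signed_angle[OF \<sigma>])
    then have "a \<bullet> b = cos \<theta>" "?J a \<bullet> b = sin \<theta>"
      by (simp_all add: inner_add_right a inner_quarter_rot_self[OF \<sigma>]
          inner_quarter_rot_quarter_rot[OF \<sigma>] inner_commute[of a "?J a"])
    then show "cis \<theta> = z" by (simp add: z_def complex_eq_iff)
  next
    assume "cis \<theta> = z"
    then show "b = rot (\<sigma> * \<theta>) a"
      using frame by (simp add: rot_signed_angle[OF \<sigma>] complex_eq_iff)
  qed
  have "z \<noteq> 0" using \<open>cmod z = 1\<close> by auto
  then have "cis (Arg z) = z" using \<open>cmod z = 1\<close> by (simp add: cis_Arg sgn_div_norm)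
  then show ?thesis
    unfolding rot_iff by (intro ex1I[of _ "Arg z"]) (auto simp: mpi_less_Arg Arg_le_pi Arg_cis)
qed

section \<open>Cyclic indices\<close>

lemma prev_idx_less: "k < n \<Longrightarrow> prev_idx n k < n"
  by (simp add: prev_idx_def)

lemma prev_idx_Suc_mod: "k < n \<Longrightarrow> prev_idx n (Suc k mod n) = k"
  by (cases "Suc k = n") (auto simp: prev_idx_def)

lemma Suc_prev_idx_mod: "k < n \<Longrightarrow> Suc (prev_idx n k) mod n = k"
  by (cases k) (auto simp: prev_idx_def mod_Suc)

lemma sum_Suc_mod: "(\<Sum>k<n. f (Suc k mod n)) = (\<Sum>k<n. f k :: 'a::comm_monoid_add)"
  by (rule sum.reindex_bij_witness[of _ "prev_idx n" "\<lambda>k. Suc k mod n"])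
    (auto simp: prev_idx_less prev_idx_Suc_mod Suc_prev_idx_mod)

definition cyc_diff :: "(nat \<Rightarrow> 'a::ab_group_add) \<Rightarrow> nat \<Rightarrow> nat \<Rightarrow> 'a" where
  "cyc_diff f n k = f (Suc k mod n) - f k"

lemma sum_cyc_diff: "(\<Sum>k<n. cyc_diff f n k) = 0"
  by (simp add: cyc_diff_def sum_subtractf sum_Suc_mod)

lemma sum_inner_cyc_diff:
  "(\<Sum>k<n. x k \<bullet> cyc_diff y n k) = (\<Sum>k<n. (x (prev_idx n k) - x k) \<bullet> y k)"
proof -
  have "(\<Sum>k<n. x k \<bullet> y (Suc k mod n)) = (\<Sum>k<n. x (prev_idx n (Suc k mod n)) \<bullet> y (Suc k mod n))"
    by (rule sum.cong) (simp_all add: prev_idx_Suc_mod)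
  also have "\<dots> = (\<Sum>k<n. x (prev_idx n k) \<bullet> y k)"
    by (rule sum_Suc_mod)
  finally show ?thesis
    by (simp add: cyc_diff_def inner_diff_left inner_diff_right sum_subtractf)
qed

section \<open>Edge directions, normals and tangents of a closed discrete curve\<close>

definition edge_dir :: "(nat \<Rightarrow> real^2) \<Rightarrow> nat \<Rightarrow> nat \<Rightarrow> real^2" where
  "edge_dir p n k = (1 / edge_len p n k) *\<^sub>R (p (Suc k mod n) - p (k mod n))"

lemma edge_normal_eq: "edge_normal \<sigma> p n k = quarter_rot \<sigma> (edge_dir p n k)"
  by (simp add: edge_normal_def edge_dir_def)

lemma edge_len_pos: "closed_curve n p \<Longrightarrow> k < n \<Longrightarrow> edge_len p n k > 0"
  by (simp add: closed_curve_def edge_len_def)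

lemma inner_edge_dir_self:
  assumes "closed_curve n p" "k < n"
  shows "edge_dir p n k \<bullet> edge_dir p n k = 1"
proof -
  have "edge_len p n k \<noteq> 0" using assms by (simp add: closed_curve_def)
  then have "norm (edge_dir p n k) = 1"
    by (simp add: edge_dir_def edge_len_def)
  then show ?thesis by (simp add: norm_eq_1)
qed

lemma signed_angle_rot:
  assumes \<sigma>: "\<sigma> = 1 \<or> \<sigma> = -1" and closed: "closed_curve n p" and k: "k < n"
  shows "-pi < signed_angle \<sigma> p n k \<and> signed_angle \<sigma> p n k \<le> pi \<and>
    edge_normal \<sigma> p n k = rot (\<sigma> * signed_angle \<sigma> p n k) (edge_normal \<sigma> p n (prev_idx n k))"
proof -
  have unit: "edge_normal \<sigma> p n j \<bullet> edge_normal \<sigma> p n j = 1" if "j < n" for j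
    using inner_edge_dir_self[OF closed that]
    by (simp add: edge_normal_eq inner_quarter_rot_quarter_rot[OF \<sigma>])
  have "k mod n < n" "prev_idx n k < n"
    using k by (simp_all add: prev_idx_less)
  then have "-pi < signed_angle \<sigma> p n k \<and> signed_angle \<sigma> p n k \<le> pi \<and>
    edge_normal \<sigma> p n (k mod n) = rot (\<sigma> * signed_angle \<sigma> p n k) (edge_normal \<sigma> p n (prev_idx n k))"
    unfolding signed_angle_def by (intro theI'[OF ex1_rot_angle[OF \<sigma>]] unit)
  then show ?thesis
    using k by simp
qed

lemma edge_dir_turn:
  assumes \<sigma>: "\<sigma> = 1 \<or> \<sigma> = -1" and "closed_curve n p" "k < n"
  shows "edge_dir p n k = cos (signed_angle \<sigma> p n k) *\<^sub>R edge_dir p n (prev_idx n k)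
           + sin (signed_angle \<sigma> p n k) *\<^sub>R quarter_rot \<sigma> (edge_dir p n (prev_idx n k))"
proof -
  let ?J = "quarter_rot \<sigma>" and ?\<theta> = "signed_angle \<sigma> p n k"
    and ?u = "edge_dir p n k" and ?v = "edge_dir p n (prev_idx n k)"
  have "?J ?u = ?J (cos ?\<theta> *\<^sub>R ?v + sin ?\<theta> *\<^sub>R ?J ?v)"
    using signed_angle_rot[OF assms(1-3)]
    by (simp add: edge_normal_eq rot_signed_angle[OF \<sigma>] rot_add rot_scaleR)
  then have "?J (?J ?u) = ?J (?J (cos ?\<theta> *\<^sub>R ?v + sin ?\<theta> *\<^sub>R ?J ?v))"
    by simp
  then show ?thesis
    by (simp only: quarter_rot_quarter_rot[OF \<sigma>] neg_equal_iff_equal)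
qed

lemma tan_half_angle: "tan (\<theta> / 2) = sin \<theta> / (1 + cos \<theta>)"
  using tan_half[of "\<theta> / 2"] by (simp add: add.commute)

lemma quarter_rot_bisector:
  assumes \<sigma>: "\<sigma> = 1 \<or> \<sigma> = -1" and c: "1 + cos \<theta> \<noteq> 0"
    and u': "u' = cos \<theta> *\<^sub>R u + sin \<theta> *\<^sub>R quarter_rot \<sigma> u"
  shows "(1 / (1 + cos \<theta>)) *\<^sub>R (quarter_rot \<sigma> u' + quarter_rot \<sigma> u) = quarter_rot \<sigma> u - tan (\<theta> / 2) *\<^sub>R u"
    and "(1 / (1 + cos \<theta>)) *\<^sub>R (quarter_rot \<sigma> u' + quarter_rot \<sigma> u) = quarter_rot \<sigma> u' + tan (\<theta> / 2) *\<^sub>R u'"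
proof -
  let ?J = "quarter_rot \<sigma>" and ?\<tau> = "tan (\<theta> / 2)"
  have Ju': "?J u' = cos \<theta> *\<^sub>R ?J u - sin \<theta> *\<^sub>R u"
    by (simp add: u' rot_add rot_scaleR quarter_rot_quarter_rot[OF \<sigma>])
  have "(1 / (1 + cos \<theta>)) *\<^sub>R (?J u' + ?J u) = (1 / (1 + cos \<theta>)) *\<^sub>R ((1 + cos \<theta>) *\<^sub>R ?J u - sin \<theta> *\<^sub>R u)"
    unfolding Ju' by (simp add: algebra_simps)
  also have "\<dots> = ?J u - ?\<tau> *\<^sub>R u"
    using c by (simp add: tan_half_angle scaleR_diff_right)
  finally show first: "(1 / (1 + cos \<theta>)) *\<^sub>R (?J u' + ?J u) = ?J u - ?\<tau> *\<^sub>R u" .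
  have \<tau>: "?\<tau> * (1 + cos \<theta>) = sin \<theta>"
    using c by (simp add: tan_half_angle)
  have "?\<tau> * sin \<theta> = 1 - cos \<theta>"
    using c sin_cos_squared_add[of \<theta>] by (simp add: tan_half_angle field_simps power2_eq_square)
  with \<tau> have "cos \<theta> + ?\<tau> * sin \<theta> = 1" "?\<tau> * cos \<theta> - sin \<theta> = - ?\<tau>"
    by (simp_all add: algebra_simps)
  moreover have "?J u' + ?\<tau> *\<^sub>R u' = (cos \<theta> + ?\<tau> * sin \<theta>) *\<^sub>R ?J u + (?\<tau> * cos \<theta> - sin \<theta>) *\<^sub>R u"
    unfolding Ju' by (simp add: u' algebra_simps)
  ultimately have "?J u' + ?\<tau> *\<^sub>R u' = ?J u - ?\<tau> *\<^sub>R u"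
    by simp
  then show "(1 / (1 + cos \<theta>)) *\<^sub>R (?J u' + ?J u) = ?J u' + ?\<tau> *\<^sub>R u'"
    by (simp add: first)
qed

context
  fixes \<sigma> :: real and n :: nat and p :: "nat \<Rightarrow> real^2" and k :: nat
  assumes \<sigma>: "\<sigma> = 1 \<or> \<sigma> = -1" and closed: "closed_curve n p" and k: "k < n"
    and not_cusp: "signed_angle \<sigma> p n k \<noteq> pi"
begin

lemma vertex_normal_edge_dir:
  "vertex_normal \<sigma> p n k = quarter_rot \<sigma> (edge_dir p n (prev_idx n k))
     - tan (signed_angle \<sigma> p n k / 2) *\<^sub>R edge_dir p n (prev_idx n k)"
  "vertex_normal \<sigma> p n k = quarter_rot \<sigma> (edge_dir p n k)
     + tan (signed_angle \<sigma> p n k / 2) *\<^sub>R edge_dir p n k"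
proof -
  let ?\<theta> = "signed_angle \<sigma> p n k"
  have "-pi < ?\<theta>" "?\<theta> < pi"
    using signed_angle_rot[OF \<sigma> closed k] not_cusp by auto
  then have "1 + cos ?\<theta> \<noteq> 0"
    using cos_gt_neg1 by fastforce
  note bisector = quarter_rot_bisector[OF \<sigma> this edge_dir_turn[OF \<sigma> closed k]]
  have "vertex_normal \<sigma> p n k = (1 / (1 + cos ?\<theta>)) *\<^sub>R
      (quarter_rot \<sigma> (edge_dir p n k) + quarter_rot \<sigma> (edge_dir p n (prev_idx n k)))"
    using k by (simp add: vertex_normal_def edge_normal_eq)
  then show "vertex_normal \<sigma> p n k = quarter_rot \<sigma> (edge_dir p n (prev_idx n k))
       - tan (?\<theta> / 2) *\<^sub>R edge_dir p n (prev_idx n k)"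
    and "vertex_normal \<sigma> p n k = quarter_rot \<sigma> (edge_dir p n k) + tan (?\<theta> / 2) *\<^sub>R edge_dir p n k"
    using bisector by simp_all
qed

lemma vertex_tangent_edge_dir:
  "vertex_tangent \<sigma> p n k = edge_dir p n (prev_idx n k)
     + tan (signed_angle \<sigma> p n k / 2) *\<^sub>R quarter_rot \<sigma> (edge_dir p n (prev_idx n k))"
  "vertex_tangent \<sigma> p n k = edge_dir p n k
     - tan (signed_angle \<sigma> p n k / 2) *\<^sub>R quarter_rot \<sigma> (edge_dir p n k)"
  unfolding vertex_tangent_def
  by (subst vertex_normal_edge_dir(1), simp add: rot_diff rot_scaleR quarter_rot_quarter_rot[OF \<sigma>])
    (subst vertex_normal_edge_dir(2), simp add: rot_add rot_scaleR quarter_rot_quarter_rot[OF \<sigma>])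

lemma edge_dir_diff:
  "edge_dir p n k - edge_dir p n (prev_idx n k)
     = tan (signed_angle \<sigma> p n k / 2) *\<^sub>R quarter_rot \<sigma> (edge_dir p n (prev_idx n k) + edge_dir p n k)"
proof -
  let ?\<tau> = "tan (signed_angle \<sigma> p n k / 2)" and ?J = "quarter_rot \<sigma>"
  have "edge_dir p n (prev_idx n k) + ?\<tau> *\<^sub>R ?J (edge_dir p n (prev_idx n k))
      = edge_dir p n k - ?\<tau> *\<^sub>R ?J (edge_dir p n k)"
    using vertex_tangent_edge_dir by (rule trans[OF sym])
  then show ?thesis
    by (simp add: rot_add scaleR_add_right eq_diff_eq diff_eq_eq add_ac)
qed

end

section \<open>Second derivatives along a family of curves\<close>

lemma has_real_derivative_inner:
  assumes "(f has_vector_derivative f') (at t)" "(g has_vector_derivative g') (at t)"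
  shows "((\<lambda>t. f t \<bullet> g t) has_real_derivative f' \<bullet> g t + f t \<bullet> g') (at t)"
  using has_derivative_inner[OF assms[unfolded has_vector_derivative_def]]
  unfolding has_field_derivative_def
  by (rule has_derivative_eq_rhs) (auto simp: fun_eq_iff algebra_simps)

lemma has_real_derivative_norm:
  assumes "(f has_vector_derivative f') (at t)" "f t \<noteq> 0"
  shows "((\<lambda>t. norm (f t)) has_real_derivative (f t \<bullet> f') / norm (f t)) (at t)"
proof -
  have "((\<lambda>t. sqrt (f t \<bullet> f t)) has_real_derivative
      inverse (sqrt (f t \<bullet> f t)) / 2 * (f' \<bullet> f t + f t \<bullet> f')) (at t)"
    using assms by (intro DERIV_chain2[OF DERIV_real_sqrt] has_real_derivative_inner) auto
  then show ?thesis
    by (simp add: norm_eq_sqrt_inner inner_commute field_simps)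
qed

lemma has_real_derivative_inner_div_norm:
  assumes "(f has_vector_derivative f' x) (at x)" "(f' has_vector_derivative f'') (at x)" "f x \<noteq> 0"
  shows "((\<lambda>t. (f t \<bullet> f' t) / norm (f t)) has_real_derivative
           (f' x \<bullet> f' x + f x \<bullet> f'') / norm (f x) - (f x \<bullet> f' x)\<^sup>2 / norm (f x) ^ 3) (at x)"
proof (rule DERIV_cong)
  have "norm (f x) \<noteq> 0" using assms(3) by simp
  then show "((\<lambda>t. (f t \<bullet> f' t) / norm (f t)) has_real_derivative
      ((f' x \<bullet> f' x + f x \<bullet> f'') * norm (f x) - f x \<bullet> f' x * (f x \<bullet> f' x / norm (f x)))
        / (norm (f x) * norm (f x))) (at x)"
    by (rule DERIV_divide[OF has_real_derivative_inner[OF assms(1,2)] has_real_derivative_norm[OF assms(1,3)]])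
  show "((f' x \<bullet> f' x + f x \<bullet> f'') * norm (f x) - f x \<bullet> f' x * (f x \<bullet> f' x / norm (f x)))
        / (norm (f x) * norm (f x))
      = (f' x \<bullet> f' x + f x \<bullet> f'') / norm (f x) - (f x \<bullet> f' x)\<^sup>2 / norm (f x) ^ 3"
    using \<open>norm (f x) \<noteq> 0\<close> by (simp add: field_simps power2_eq_square power3_eq_cube)
qed

lemma deriv_deriv_eqI:
  fixes f :: "real \<Rightarrow> real"
  assumes "open S" "x \<in> S" "\<And>t. t \<in> S \<Longrightarrow> (f has_real_derivative f' t) (at t)"
    and "(f' has_real_derivative f'') (at x)"
  shows "deriv (deriv f) x = f''"
proof -
  have "deriv f t = f' t" if "t \<in> S" for t
    using assms(3)[OF that] by (rule DERIV_imp_deriv)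
  then have "\<forall>\<^sub>F t in nhds x. deriv f t = f' t"
    using eventually_nhds_in_open[OF assms(1,2)] by (auto elim: eventually_mono)
  then show ?thesis
    using DERIV_imp_deriv[OF assms(4)] by (simp add: deriv_cong_ev)
qed

lemma second_derivative_eq_0_if_constant:
  fixes f :: "real \<Rightarrow> real"
  assumes "open S" "x \<in> S" "\<And>t. t \<in> S \<Longrightarrow> f t = c"
    and "\<And>t. t \<in> S \<Longrightarrow> (f has_real_derivative f' t) (at t)"
    and "(f' has_real_derivative f'') (at x)"
  shows "f'' = 0"
proof -
  have "f' t = 0" if "t \<in> S" for t
  proof (rule DERIV_unique)
    show "((\<lambda>_. c) has_real_derivative f' t) (at t)"
      using has_field_derivative_transform_within_open[OF assms(4)[OF that] assms(1) that] assms(3) by auto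
  qed simp
  then have "((\<lambda>_. 0) has_real_derivative f'') (at x)"
    using has_field_derivative_transform_within_open[OF assms(5,1,2)] by auto
  then show ?thesis
    using DERIV_unique DERIV_const by blast
qed

lemma has_vector_derivative_cyc_diff:
  assumes "k < n" "\<forall>j<n. ((\<lambda>t. f t j) has_vector_derivative f' j) (at x)"
  shows "((\<lambda>t. cyc_diff (f t) n k) has_vector_derivative cyc_diff f' n k) (at x)"
  unfolding cyc_diff_def using assms by (intro has_vector_derivative_diff) auto

lemma curve_length_eq: "curve_length n p = (\<Sum>k<n. norm (cyc_diff p n k))"
  by (simp add: curve_length_def edge_len_def cyc_diff_def)

lemma curve_vol_eq:
  assumes \<sigma>: "\<sigma> = 1 \<or> \<sigma> = -1" and "closed_curve n p"
  shows "curve_vol \<sigma> n p = (1/2) * (\<Sum>k<n. p k \<bullet> quarter_rot \<sigma> (cyc_diff p n k))"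
  unfolding curve_vol_def
proof (intro arg_cong[where f = "(*) (1/2)"] sum.cong refl)
  fix k assume "k \<in> {..<n}"
  with assms(2) have "edge_len p n k \<noteq> 0" by (simp add: closed_curve_def)
  with \<open>k \<in> {..<n}\<close> show "p k \<bullet> edge_normal \<sigma> p n k * edge_len p n k = p k \<bullet> quarter_rot \<sigma> (cyc_diff p n k)"
    by (simp add: edge_normal_def edge_len_def cyc_diff_def rot_scaleR)
qed

lemma has_vector_derivative_rot:
  "(f has_vector_derivative f') F \<Longrightarrow> ((\<lambda>t. rot \<phi> (f t)) has_vector_derivative rot \<phi> f') F"
  by (rule bounded_linear.has_vector_derivative[OF bounded_linear_rot])

context
  fixes P V :: "real \<Rightarrow> nat \<Rightarrow> real^2" and A :: "nat \<Rightarrow> real^2"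
    and S :: "real set" and x :: real and n :: nat
  assumes S: "open S" "x \<in> S"
    and closed: "\<And>t. t \<in> S \<Longrightarrow> closed_curve n (P t)"
    and velocity: "\<And>k t. k < n \<Longrightarrow> t \<in> S \<Longrightarrow> ((\<lambda>s. P s k) has_vector_derivative V t k) (at t)"
    and acceleration: "\<And>k. k < n \<Longrightarrow> ((\<lambda>t. V t k) has_vector_derivative A k) (at x)"
begin

lemma has_vector_derivative_edge:
  "k < n \<Longrightarrow> t \<in> S \<Longrightarrow> ((\<lambda>s. cyc_diff (P s) n k) has_vector_derivative cyc_diff (V t) n k) (at t)"
  by (simp add: has_vector_derivative_cyc_diff velocity)

lemma has_vector_derivative_edge_velocity:
  "k < n \<Longrightarrow> ((\<lambda>t. cyc_diff (V t) n k) has_vector_derivative cyc_diff A n k) (at x)"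
  by (simp add: has_vector_derivative_cyc_diff acceleration)

lemma edge_nonzero: "k < n \<Longrightarrow> t \<in> S \<Longrightarrow> cyc_diff (P t) n k \<noteq> 0"
  using closed by (auto simp: closed_curve_def edge_len_def cyc_diff_def)

lemma curve_length_second_derivative:
  "deriv (deriv (\<lambda>t. curve_length n (P t))) x =
     (\<Sum>k<n. (cyc_diff (V x) n k \<bullet> cyc_diff (V x) n k + cyc_diff (P x) n k \<bullet> cyc_diff A n k)
                / norm (cyc_diff (P x) n k)
            - (cyc_diff (P x) n k \<bullet> cyc_diff (V x) n k)\<^sup>2 / norm (cyc_diff (P x) n k) ^ 3)"
proof (rule deriv_deriv_eqI[OF S])
  fix t assume "t \<in> S"
  then show "((\<lambda>t. curve_length n (P t)) has_real_derivative
      (\<Sum>k<n. cyc_diff (P t) n k \<bullet> cyc_diff (V t) n k / norm (cyc_diff (P t) n k))) (at t)"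
    unfolding curve_length_eq
    by (intro DERIV_sum has_real_derivative_norm has_vector_derivative_edge edge_nonzero) auto
next
  show "((\<lambda>t. \<Sum>k<n. cyc_diff (P t) n k \<bullet> cyc_diff (V t) n k / norm (cyc_diff (P t) n k))
      has_real_derivative
      (\<Sum>k<n. (cyc_diff (V x) n k \<bullet> cyc_diff (V x) n k + cyc_diff (P x) n k \<bullet> cyc_diff A n k)
                / norm (cyc_diff (P x) n k)
            - (cyc_diff (P x) n k \<bullet> cyc_diff (V x) n k)\<^sup>2 / norm (cyc_diff (P x) n k) ^ 3)) (at x)"
    using S(2) by (intro DERIV_sum has_real_derivative_inner_div_norm has_vector_derivative_edge
        has_vector_derivative_edge_velocity edge_nonzero) auto
qed

lemma curve_vol_second_variation:
  assumes \<sigma>: "\<sigma> = 1 \<or> \<sigma> = -1" and vol: "\<And>t. t \<in> S \<Longrightarrow> curve_vol \<sigma> n (P t) = c"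
  shows "(\<Sum>k<n. A k \<bullet> quarter_rot \<sigma> (cyc_diff (P x) n k)
            + 2 * (V x k \<bullet> quarter_rot \<sigma> (cyc_diff (V x) n k))
            + P x k \<bullet> quarter_rot \<sigma> (cyc_diff A n k)) = 0"
proof -
  let ?J = "quarter_rot \<sigma>"
  have "(1/2) * (\<Sum>k<n. A k \<bullet> ?J (cyc_diff (P x) n k) + V x k \<bullet> ?J (cyc_diff (V x) n k)
          + (V x k \<bullet> ?J (cyc_diff (V x) n k) + P x k \<bullet> ?J (cyc_diff A n k))) = 0"
  proof (rule second_derivative_eq_0_if_constant[OF S])
    fix t assume "t \<in> S"
    then show "(1/2) * (\<Sum>k<n. P t k \<bullet> ?J (cyc_diff (P t) n k)) = c"
      using vol curve_vol_eq[OF \<sigma> closed] by simp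
    show "((\<lambda>t. (1/2) * (\<Sum>k<n. P t k \<bullet> ?J (cyc_diff (P t) n k))) has_real_derivative
        (1/2) * (\<Sum>k<n. V t k \<bullet> ?J (cyc_diff (P t) n k) + P t k \<bullet> ?J (cyc_diff (V t) n k))) (at t)"
      using \<open>t \<in> S\<close> by (intro DERIV_cmult DERIV_sum has_real_derivative_inner velocity
          has_vector_derivative_rot has_vector_derivative_edge) auto
  next
    show "((\<lambda>t. (1/2) * (\<Sum>k<n. V t k \<bullet> ?J (cyc_diff (P t) n k) + P t k \<bullet> ?J (cyc_diff (V t) n k)))
        has_real_derivative (1/2) * (\<Sum>k<n. A k \<bullet> ?J (cyc_diff (P x) n k) + V x k \<bullet> ?J (cyc_diff (V x) n k)
          + (V x k \<bullet> ?J (cyc_diff (V x) n k) + P x k \<bullet> ?J (cyc_diff A n k)))) (at x)"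
      using S(2) by (intro DERIV_cmult DERIV_sum DERIV_add has_real_derivative_inner velocity acceleration
          has_vector_derivative_rot has_vector_derivative_edge has_vector_derivative_edge_velocity) auto
  qed
  then show ?thesis by (simp add: algebra_simps)
qed

end

section \<open>Second variation of the length of an equiangular polygon\<close>

lemma edge_second_variation_identity:
  fixes u v v' :: "real^2"
  assumes \<sigma>: "\<sigma> = 1 \<or> \<sigma> = -1" and u: "u \<bullet> u = 1" and l0: "l0 \<noteq> 0"
    and v: "v = \<psi> *\<^sub>R (quarter_rot \<sigma> u + \<tau> *\<^sub>R u) + \<eta> *\<^sub>R (u - \<tau> *\<^sub>R quarter_rot \<sigma> u)"
    and v': "v' = \<psi>' *\<^sub>R (quarter_rot \<sigma> u - \<tau> *\<^sub>R u) + \<eta>' *\<^sub>R (u + \<tau> *\<^sub>R quarter_rot \<sigma> u)"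
  shows "(v' - v) \<bullet> (v' - v) / l0 - ((l0 *\<^sub>R u) \<bullet> (v' - v))\<^sup>2 / l0 ^ 3
           + 2 * \<tau> / l0 * (v \<bullet> quarter_rot \<sigma> (v' - v))
         = (((\<psi>' - \<psi>) / l0)\<^sup>2 - (2 * \<tau> / l0)\<^sup>2 * \<psi> * \<psi>'
             + \<tau>\<^sup>2 * (2 * \<tau> / l0 * ((\<psi>' - \<psi>) / l0) * (\<eta>' + \<eta>) + ((\<eta>' - \<eta>) / l0)\<^sup>2)) * l0
           + 2 * \<tau> * (1 - \<tau>\<^sup>2) / l0 * (\<psi>' * \<eta>' - \<psi> * \<eta>)"
proof -
  define r where "r = quarter_rot \<sigma> u"
  define A B A' B' where "A = \<psi> * \<tau> + \<eta>" and "B = \<psi> - \<tau> * \<eta>"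
    and "A' = \<eta>' - \<psi>' * \<tau>" and "B' = \<psi>' + \<tau> * \<eta>'"
  have frame: "u \<bullet> r = 0" "r \<bullet> u = 0" "r \<bullet> r = 1" "quarter_rot \<sigma> r = - u"
    unfolding r_def using inner_quarter_rot_self[OF \<sigma>] inner_quarter_rot_quarter_rot[OF \<sigma>] u
      quarter_rot_quarter_rot[OF \<sigma>] by auto
  have v_frame: "v = A *\<^sub>R u + B *\<^sub>R r" and "v' = A' *\<^sub>R u + B' *\<^sub>R r"
    unfolding v v' A_def B_def A'_def B'_def r_def by (simp_all add: algebra_simps)
  then have w: "v' - v = (A' - A) *\<^sub>R u + (B' - B) *\<^sub>R r"
    by (simp add: algebra_simps)
  then have Jw: "quarter_rot \<sigma> (v' - v) = (A' - A) *\<^sub>R r - (B' - B) *\<^sub>R u"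
    by (simp add: rot_add rot_scaleR frame flip: r_def)
  have vJw: "v \<bullet> quarter_rot \<sigma> (v' - v) = B * (A' - A) - A * (B' - B)"
    unfolding Jw by (simp add: v_frame inner_add_left inner_diff_right frame u algebra_simps)
  have ww: "(v' - v) \<bullet> (v' - v) = (A' - A)\<^sup>2 + (B' - B)\<^sup>2"
    and uw: "(l0 *\<^sub>R u) \<bullet> (v' - v) = l0 * (A' - A)"
    unfolding w by (simp_all add: inner_add_left inner_add_right frame u power2_eq_square)
  have poly: "(B' - B)\<^sup>2 + 2 * \<tau> * (B * (A' - A) - A * (B' - B))
      = (\<psi>' - \<psi>)\<^sup>2 - (2 * \<tau>)\<^sup>2 * \<psi> * \<psi>' + \<tau>\<^sup>2 * (2 * \<tau> * (\<psi>' - \<psi>) * (\<eta>' + \<eta>) + (\<eta>' - \<eta>)\<^sup>2)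
        + 2 * \<tau> * (1 - \<tau>\<^sup>2) * (\<psi>' * \<eta>' - \<psi> * \<eta>)"
    unfolding A_def B_def A'_def B'_def by algebra
  have "(v' - v) \<bullet> (v' - v) / l0 - ((l0 *\<^sub>R u) \<bullet> (v' - v))\<^sup>2 / l0 ^ 3
           + 2 * \<tau> / l0 * (v \<bullet> quarter_rot \<sigma> (v' - v))
      = ((B' - B)\<^sup>2 + 2 * \<tau> * (B * (A' - A) - A * (B' - B))) / l0"
    unfolding ww uw vJw using l0 by (simp add: field_simps power2_eq_square power3_eq_cube)
  also have "\<dots> = ((\<psi>' - \<psi>)\<^sup>2 - (2 * \<tau>)\<^sup>2 * \<psi> * \<psi>'
        + \<tau>\<^sup>2 * (2 * \<tau> * (\<psi>' - \<psi>) * (\<eta>' + \<eta>) + (\<eta>' - \<eta>)\<^sup>2)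
        + 2 * \<tau> * (1 - \<tau>\<^sup>2) * (\<psi>' * \<eta>' - \<psi> * \<eta>)) / l0"
    by (simp only: poly)
  also have "\<dots> = (((\<psi>' - \<psi>) / l0)\<^sup>2 - (2 * \<tau> / l0)\<^sup>2 * \<psi> * \<psi>'
             + \<tau>\<^sup>2 * (2 * \<tau> / l0 * ((\<psi>' - \<psi>) / l0) * (\<eta>' + \<eta>) + ((\<eta>' - \<eta>) / l0)\<^sup>2)) * l0
           + 2 * \<tau> * (1 - \<tau>\<^sup>2) / l0 * (\<psi>' * \<eta>' - \<psi> * \<eta>)"
    using l0 by (simp add: field_simps power2_eq_square)
  finally show ?thesis .
qed


lemma quarter_rot_turn:
  assumes \<sigma>: "\<sigma> = 1 \<or> \<sigma> = -1" and d: "u' - u = \<tau> *\<^sub>R quarter_rot \<sigma> (u + u')"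
  shows "quarter_rot \<sigma> u' + \<tau> *\<^sub>R u' = quarter_rot \<sigma> u - \<tau> *\<^sub>R u"
    and "u' - \<tau> *\<^sub>R quarter_rot \<sigma> u' = u + \<tau> *\<^sub>R quarter_rot \<sigma> u"
proof -
  from d have "quarter_rot \<sigma> (u' - u) = - (\<tau> *\<^sub>R (u + u'))"
    by (simp add: rot_scaleR quarter_rot_quarter_rot[OF \<sigma>]) (simp add: algebra_simps)
  then show "quarter_rot \<sigma> u' + \<tau> *\<^sub>R u' = quarter_rot \<sigma> u - \<tau> *\<^sub>R u"
    by (simp add: rot_diff algebra_simps)
  show "u' - \<tau> *\<^sub>R quarter_rot \<sigma> u' = u + \<tau> *\<^sub>R quarter_rot \<sigma> u"
    using d by (simp add: rot_add algebra_simps)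
qed

lemma sum_edge_inner_accel:
  fixes p v a :: "nat \<Rightarrow> real^2"
  assumes \<sigma>: "\<sigma> = 1 \<or> \<sigma> = -1"
    and turn: "\<And>k. k < n \<Longrightarrow> cyc_diff p n k - cyc_diff p n (prev_idx n k)
                     = \<tau> *\<^sub>R quarter_rot \<sigma> (cyc_diff p n (prev_idx n k) + cyc_diff p n k)"
    and vol: "(\<Sum>k<n. a k \<bullet> quarter_rot \<sigma> (cyc_diff p n k) + 2 * (v k \<bullet> quarter_rot \<sigma> (cyc_diff v n k))
                + p k \<bullet> quarter_rot \<sigma> (cyc_diff a n k)) = 0"
  shows "(\<Sum>k<n. cyc_diff p n k \<bullet> cyc_diff a n k) = 2 * \<tau> * (\<Sum>k<n. v k \<bullet> quarter_rot \<sigma> (cyc_diff v n k))"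
proof -
  let ?J = "quarter_rot \<sigma>"
  let ?e = "cyc_diff p n" and ?w = "cyc_diff v n" and ?b = "cyc_diff a n"
  have by_parts_vol: "(\<Sum>k<n. p k \<bullet> ?J (?b k)) = (\<Sum>k<n. a k \<bullet> ?J (?e (prev_idx n k)))"
  proof -
    have "(\<Sum>k<n. p k \<bullet> ?J (?b k)) = - (\<Sum>k<n. ?J (p k) \<bullet> ?b k)"
      by (simp add: inner_quarter_rot_right[OF \<sigma>] sum_negf)
    also have "\<dots> = - (\<Sum>k<n. (?J (p (prev_idx n k)) - ?J (p k)) \<bullet> a k)"
      by (simp add: sum_inner_cyc_diff)
    also have "\<dots> = (\<Sum>k<n. a k \<bullet> ?J (?e (prev_idx n k)))"
      unfolding sum_negf[symmetric] by (intro sum.cong refl)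
        (simp add: cyc_diff_def Suc_prev_idx_mod rot_diff inner_commute inner_diff_left inner_diff_right)
    finally show ?thesis .
  qed
  have "(\<Sum>k<n. ?e k \<bullet> ?b k) = (\<Sum>k<n. (?e (prev_idx n k) - ?e k) \<bullet> a k)"
    by (rule sum_inner_cyc_diff)
  also have "\<dots> = (\<Sum>k<n. - \<tau> * (a k \<bullet> ?J (?e k) + a k \<bullet> ?J (?e (prev_idx n k))))"
  proof (intro sum.cong refl)
    fix k assume "k \<in> {..<n}"
    then have "?e (prev_idx n k) - ?e k = - \<tau> *\<^sub>R ?J (?e (prev_idx n k) + ?e k)"
      using turn by (metis lessThan_iff minus_diff_eq scaleR_minus_left)
    then show "(?e (prev_idx n k) - ?e k) \<bullet> a k = - \<tau> * (a k \<bullet> ?J (?e k) + a k \<bullet> ?J (?e (prev_idx n k)))"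
      by (simp add: inner_commute rot_add inner_add_right)
  qed
  also have "\<dots> = - \<tau> * ((\<Sum>k<n. a k \<bullet> ?J (?e k)) + (\<Sum>k<n. p k \<bullet> ?J (?b k)))"
    by (simp add: by_parts_vol sum_negf flip: sum_distrib_left sum.distrib)
  also have "\<dots> = 2 * \<tau> * (\<Sum>k<n. v k \<bullet> ?J (?w k))"
  proof -
    have "(\<Sum>k<n. a k \<bullet> ?J (?e k)) + 2 * (\<Sum>k<n. v k \<bullet> ?J (?w k)) + (\<Sum>k<n. p k \<bullet> ?J (?b k)) = 0"
      using vol by (simp only: sum.distrib sum_distrib_left)
    then have "(\<Sum>k<n. a k \<bullet> ?J (?e k)) + (\<Sum>k<n. p k \<bullet> ?J (?b k)) = - (2 * (\<Sum>k<n. v k \<bullet> ?J (?w k)))"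
      by linarith
    then show ?thesis
      by simp
  qed
  finally show ?thesis .
qed

lemma dgrad_eq_cyc_diff: "k < n \<Longrightarrow> dgrad l0 n f k = cyc_diff f n k / l0"
  by (simp add: dgrad_def cyc_diff_def)

lemma equiangular_second_variation:
  fixes p v a u :: "nat \<Rightarrow> real^2" and \<psi> \<eta> :: "nat \<Rightarrow> real"
  assumes \<sigma>: "\<sigma> = 1 \<or> \<sigma> = -1" and l0: "l0 \<noteq> 0" and \<kappa>: "\<kappa> = 2 * \<tau> / l0"
    and unit: "\<And>k. k < n \<Longrightarrow> u k \<bullet> u k = 1"
    and edge: "\<And>k. k < n \<Longrightarrow> cyc_diff p n k = l0 *\<^sub>R u k"
    and turn: "\<And>k. k < n \<Longrightarrow> u k - u (prev_idx n k) = \<tau> *\<^sub>R quarter_rot \<sigma> (u (prev_idx n k) + u k)"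
    and v: "\<And>k. k < n \<Longrightarrow>
      v k = \<psi> k *\<^sub>R (quarter_rot \<sigma> (u k) + \<tau> *\<^sub>R u k) + \<eta> k *\<^sub>R (u k - \<tau> *\<^sub>R quarter_rot \<sigma> (u k))"
    and vol: "(\<Sum>k<n. a k \<bullet> quarter_rot \<sigma> (cyc_diff p n k) + 2 * (v k \<bullet> quarter_rot \<sigma> (cyc_diff v n k))
                + p k \<bullet> quarter_rot \<sigma> (cyc_diff a n k)) = 0"
  shows "(\<Sum>k<n. (cyc_diff v n k \<bullet> cyc_diff v n k + cyc_diff p n k \<bullet> cyc_diff a n k) / l0
                - (cyc_diff p n k \<bullet> cyc_diff v n k)\<^sup>2 / l0 ^ 3)
       = (\<Sum>k<n. ((dgrad l0 n \<psi> k)\<^sup>2 - \<kappa>\<^sup>2 * \<psi> k * \<psi> (Suc k mod n)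
              + \<tau>\<^sup>2 * (\<kappa> * dgrad l0 n \<psi> k * (\<eta> (Suc k mod n) + \<eta> k) + (dgrad l0 n \<eta> k)\<^sup>2)) * l0)"
proof -
  let ?J = "quarter_rot \<sigma>"
  let ?e = "cyc_diff p n" and ?w = "cyc_diff v n" and ?b = "cyc_diff a n"
  let ?F = "\<lambda>k. ((dgrad l0 n \<psi> k)\<^sup>2 - \<kappa>\<^sup>2 * \<psi> k * \<psi> (Suc k mod n)
              + \<tau>\<^sup>2 * (\<kappa> * dgrad l0 n \<psi> k * (\<eta> (Suc k mod n) + \<eta> k) + (dgrad l0 n \<eta> k)\<^sup>2)) * l0"
  let ?W = "\<lambda>k. ?w k \<bullet> ?w k / l0 - (?e k \<bullet> ?w k)\<^sup>2 / l0 ^ 3"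
  have turn_edge: "?e k - ?e (prev_idx n k) = \<tau> *\<^sub>R ?J (?e (prev_idx n k) + ?e k)" if "k < n" for k
    using that turn[OF that] by (simp add: edge prev_idx_less rot_scaleR ac_simps
        flip: scaleR_diff_right scaleR_add_right)
  have v_Suc: "v (Suc k mod n) = \<psi> (Suc k mod n) *\<^sub>R (?J (u k) - \<tau> *\<^sub>R u k)
      + \<eta> (Suc k mod n) *\<^sub>R (u k + \<tau> *\<^sub>R ?J (u k))" if "k < n" for k
  proof -
    have "Suc k mod n < n" "prev_idx n (Suc k mod n) = k"
      using that by (simp_all add: prev_idx_Suc_mod)
    then show ?thesis
      using v quarter_rot_turn[OF \<sigma> turn] by simp
  qed
  have per_edge: "?W k + 2 * \<tau> / l0 * (v k \<bullet> ?J (?w k))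
      = ?F k + 2 * \<tau> * (1 - \<tau>\<^sup>2) / l0 * cyc_diff (\<lambda>j. \<psi> j * \<eta> j) n k" if "k < n" for k
    using edge_second_variation_identity[OF \<sigma> unit[OF that] l0 v[OF that] v_Suc[OF that]] that
    by (simp add: edge cyc_diff_def[of v] cyc_diff_def[of "\<lambda>j. \<psi> j * \<eta> j"] dgrad_eq_cyc_diff
        cyc_diff_def[of \<psi>] cyc_diff_def[of \<eta>] \<kappa>)
  have "(\<Sum>k<n. (?w k \<bullet> ?w k + ?e k \<bullet> ?b k) / l0 - (?e k \<bullet> ?w k)\<^sup>2 / l0 ^ 3)
      = (\<Sum>k<n. ?W k + 2 * \<tau> / l0 * (v k \<bullet> ?J (?w k)))
        + ((\<Sum>k<n. ?e k \<bullet> ?b k) - 2 * \<tau> * (\<Sum>k<n. v k \<bullet> ?J (?w k))) / l0"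
    by (simp add: sum.distrib sum_subtractf sum_divide_distrib sum_distrib_left add_divide_distrib
        diff_divide_distrib)
  also have "\<dots> = (\<Sum>k<n. ?W k + 2 * \<tau> / l0 * (v k \<bullet> ?J (?w k)))"
    by (simp add: sum_edge_inner_accel[OF \<sigma> turn_edge vol])
  also have "\<dots> = (\<Sum>k<n. ?F k + 2 * \<tau> * (1 - \<tau>\<^sup>2) / l0 * cyc_diff (\<lambda>j. \<psi> j * \<eta> j) n k)"
    by (rule sum.cong[OF refl]) (rule per_edge, simp)
  also have "\<dots> = (\<Sum>k<n. ?F k)"
    by (simp only: sum.distrib flip: sum_distrib_left) (simp add: sum_cyc_diff)
  finally show ?thesis .
qed

lemma sum_dgrad_sq_eq_neg_sum_dlap:
  fixes \<psi> :: "nat \<Rightarrow> real"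
  assumes l0: "l0 \<noteq> 0"
  shows "(\<Sum>k<n. (dgrad l0 n \<psi> k)\<^sup>2 * l0) = - (\<Sum>k<n. \<psi> k * dlap l0 n \<psi> k * l0)"
proof -
  let ?g = "dgrad l0 n \<psi>"
  have "(\<Sum>k<n. (?g k)\<^sup>2 * l0) = (\<Sum>k<n. ?g k \<bullet> cyc_diff \<psi> n k)"
    using l0 by (intro sum.cong refl) (simp add: dgrad_eq_cyc_diff power2_eq_square)
  also have "\<dots> = (\<Sum>k<n. (?g (prev_idx n k) - ?g k) \<bullet> \<psi> k)"
    by (rule sum_inner_cyc_diff)
  also have "\<dots> = - (\<Sum>k<n. \<psi> k * dlap l0 n \<psi> k * l0)"
    unfolding sum_negf[symmetric] using l0 by (intro sum.cong refl) (simp add: dlap_def field_simps)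
  finally show ?thesis .
qed

lemma discrete_jacobi_form:
  fixes \<psi> :: "nat \<Rightarrow> real"
  assumes "l0 \<noteq> 0"
  shows "(\<Sum>k<n. ((dgrad l0 n \<psi> k)\<^sup>2 - \<kappa>\<^sup>2 * \<psi> k * \<psi> (Suc k mod n)) * l0)
    = - (\<Sum>k<n. \<psi> k * (dlap l0 n \<psi> k + \<kappa>\<^sup>2 * \<psi> (Suc k mod n)) * l0)"
proof -
  have "(\<Sum>k<n. ((dgrad l0 n \<psi> k)\<^sup>2 - \<kappa>\<^sup>2 * \<psi> k * \<psi> (Suc k mod n)) * l0)
      = (\<Sum>k<n. (dgrad l0 n \<psi> k)\<^sup>2 * l0) - (\<Sum>k<n. \<kappa>\<^sup>2 * \<psi> k * \<psi> (Suc k mod n) * l0)"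
    by (simp add: left_diff_distrib sum_subtractf)
  also have "\<dots> = - (\<Sum>k<n. \<psi> k * dlap l0 n \<psi> k * l0) - (\<Sum>k<n. \<kappa>\<^sup>2 * \<psi> k * \<psi> (Suc k mod n) * l0)"
    unfolding sum_dgrad_sq_eq_neg_sum_dlap[OF assms] ..
  also have "\<dots> = - (\<Sum>k<n. \<psi> k * (dlap l0 n \<psi> k + \<kappa>\<^sup>2 * \<psi> (Suc k mod n)) * l0)"
    by (simp add: algebra_simps sum.distrib)
  finally show ?thesis .
qed

lemma equiangular_length_second_variation:
  fixes p :: "nat \<Rightarrow> real^2" and P V :: "real \<Rightarrow> nat \<Rightarrow> real^2" and A :: "nat \<Rightarrow> real^2"
  assumes \<sigma>: "\<sigma> = 1 \<or> \<sigma> = -1" and closed: "closed_curve n p"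
    and len: "\<forall>k<n. edge_len p n k = l0" and angle: "\<forall>k<n. signed_angle \<sigma> p n k = \<theta>0"
    and "\<theta>0 < pi" and \<kappa>: "\<kappa> = 2 * tan (\<theta>0 / 2) / l0" and "\<epsilon> > 0"
    and closed_P: "\<forall>t\<in>{-\<epsilon><..<\<epsilon>}. closed_curve n (P t)"
    and velocity: "\<forall>k<n. \<forall>t\<in>{-\<epsilon><..<\<epsilon>}. ((\<lambda>s. P s k) has_vector_derivative V t k) (at t)"
    and acceleration: "\<forall>k<n. ((\<lambda>t. V t k) has_vector_derivative A k) (at 0)"
    and P0: "\<forall>k<n. P 0 k = p k"
    and vol: "\<forall>t\<in>{-\<epsilon><..<\<epsilon>}. curve_vol \<sigma> n (P t) = curve_vol \<sigma> n p"
    and V0: "\<forall>k<n. V 0 k = \<psi> k *\<^sub>R vertex_normal \<sigma> p n k + \<eta> k *\<^sub>R vertex_tangent \<sigma> p n k"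
  shows "deriv (deriv (\<lambda>t. curve_length n (P t))) 0 =
           (\<Sum>k<n. ((dgrad l0 n \<psi> k)\<^sup>2 - \<kappa>\<^sup>2 * \<psi> k * \<psi> (Suc k mod n)
              + (tan (\<theta>0 / 2))\<^sup>2 * (\<kappa> * dgrad l0 n \<psi> k * (\<eta> (Suc k mod n) + \<eta> k)
                                     + (dgrad l0 n \<eta> k)\<^sup>2)) * l0)"
proof -
  let ?S = "{-\<epsilon><..<\<epsilon>}" and ?u = "edge_dir p n" and ?\<tau> = "tan (\<theta>0 / 2)"
  have S: "open ?S" "0 \<in> ?S" using \<open>\<epsilon> > 0\<close> by auto
  have "0 < n"
    using closed by (simp add: closed_curve_def)
  then have l0: "l0 > 0"
    using len edge_len_pos[OF closed] by auto
  have edge: "cyc_diff (P 0) n k = l0 *\<^sub>R ?u k" if "k < n" for k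
    using that l0 len P0 by (simp add: edge_dir_def cyc_diff_def)
  have unit: "?u k \<bullet> ?u k = 1" if "k < n" for k
    by (rule inner_edge_dir_self[OF closed that])
  have norm_edge: "norm (cyc_diff (P 0) n k) = l0" if "k < n" for k
  proof -
    have "norm (?u k) = 1" using unit[OF that] by (simp add: norm_eq_1)
    then show ?thesis
      using that l0 edge by simp
  qed
  have not_cusp: "signed_angle \<sigma> p n k \<noteq> pi" if "k < n" for k
    using angle that \<open>\<theta>0 < pi\<close> by simp
  have turn: "?u k - ?u (prev_idx n k) = ?\<tau> *\<^sub>R quarter_rot \<sigma> (?u (prev_idx n k) + ?u k)" if "k < n" for k
    using edge_dir_diff[OF \<sigma> closed that not_cusp[OF that]] angle that by simp
  have v: "V 0 k = \<psi> k *\<^sub>R (quarter_rot \<sigma> (?u k) + ?\<tau> *\<^sub>R ?u k)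
      + \<eta> k *\<^sub>R (?u k - ?\<tau> *\<^sub>R quarter_rot \<sigma> (?u k))" if "k < n" for k
    using V0 vertex_normal_edge_dir(2)[OF \<sigma> closed that not_cusp[OF that]]
      vertex_tangent_edge_dir(2)[OF \<sigma> closed that not_cusp[OF that]] angle that by simp
  have vol'': "(\<Sum>k<n. A k \<bullet> quarter_rot \<sigma> (cyc_diff (P 0) n k)
      + 2 * (V 0 k \<bullet> quarter_rot \<sigma> (cyc_diff (V 0) n k)) + P 0 k \<bullet> quarter_rot \<sigma> (cyc_diff A n k)) = 0"
    using closed_P velocity acceleration vol by (intro curve_vol_second_variation[OF S _ _ _ \<sigma>]) auto
  have "deriv (deriv (\<lambda>t. curve_length n (P t))) 0 =
     (\<Sum>k<n. (cyc_diff (V 0) n k \<bullet> cyc_diff (V 0) n k + cyc_diff (P 0) n k \<bullet> cyc_diff A n k)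
                / norm (cyc_diff (P 0) n k)
            - (cyc_diff (P 0) n k \<bullet> cyc_diff (V 0) n k)\<^sup>2 / norm (cyc_diff (P 0) n k) ^ 3)"
    using closed_P velocity acceleration by (intro curve_length_second_derivative[OF S]) auto
  also have "\<dots> = (\<Sum>k<n. (cyc_diff (V 0) n k \<bullet> cyc_diff (V 0) n k + cyc_diff (P 0) n k \<bullet> cyc_diff A n k) / l0
                - (cyc_diff (P 0) n k \<bullet> cyc_diff (V 0) n k)\<^sup>2 / l0 ^ 3)"
    by (intro sum.cong refl) (simp add: norm_edge)
  also have "\<dots> = (\<Sum>k<n. ((dgrad l0 n \<psi> k)\<^sup>2 - \<kappa>\<^sup>2 * \<psi> k * \<psi> (Suc k mod n)
              + ?\<tau>\<^sup>2 * (\<kappa> * dgrad l0 n \<psi> k * (\<eta> (Suc k mod n) + \<eta> k) + (dgrad l0 n \<eta> k)\<^sup>2)) * l0)"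
    using l0 by (intro equiangular_second_variation[OF \<sigma> _ \<kappa> unit edge turn v vol'']) auto
  finally show ?thesis .
qed

theorem mainTheorem15:
  fixes p :: "nat \<Rightarrow> real^2" and P :: "real \<Rightarrow> nat \<Rightarrow> real^2"
    and n :: nat and \<sigma> \<theta>0 l0 \<kappa> \<epsilon> :: real and \<psi> \<eta> :: "nat \<Rightarrow> real"
  assumes "\<sigma> = 1 \<or> \<sigma> = -1"
    and "closed_curve n p"
    and "\<forall>k<n. edge_len p n k = l0"
    and "\<forall>k<n. signed_angle \<sigma> p n k = \<theta>0"
    and "-pi < \<theta>0" and "\<theta>0 < pi"
    and "\<kappa> = 2 * tan (\<theta>0 / 2) / l0"
    and "\<epsilon> > 0"
    and "\<forall>t\<in>{-\<epsilon><..<\<epsilon>}. closed_curve n (P t)"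
    and "C2_family \<epsilon> n P"
    and "\<forall>k<n. P 0 k = p k"
    and "\<forall>t\<in>{-\<epsilon><..<\<epsilon>}. curve_vol \<sigma> n (P t) = curve_vol \<sigma> n p"
    and "\<forall>k<n. vector_derivative (\<lambda>t. P t k) (at 0) =
            \<psi> k *\<^sub>R vertex_normal \<sigma> p n k + \<eta> k *\<^sub>R vertex_tangent \<sigma> p n k"
  shows "deriv (deriv (\<lambda>t. curve_length n (P t))) 0 =
           (\<Sum>k<n. ((dgrad l0 n \<psi> k)\<^sup>2 - \<kappa>\<^sup>2 * \<psi> k * \<psi> (Suc k mod n)
              + (tan (\<theta>0 / 2))\<^sup>2 * (\<kappa> * dgrad l0 n \<psi> k * (\<eta> (Suc k mod n) + \<eta> k)
                                     + (dgrad l0 n \<eta> k)\<^sup>2)) * l0)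
       \<and> ((\<forall>k<n. \<eta> k = 0) \<longrightarrow>
           deriv (deriv (\<lambda>t. curve_length n (P t))) 0 =
             (\<Sum>k<n. ((dgrad l0 n \<psi> k)\<^sup>2 - \<kappa>\<^sup>2 * \<psi> k * \<psi> (Suc k mod n)) * l0)
           \<and> (\<Sum>k<n. ((dgrad l0 n \<psi> k)\<^sup>2 - \<kappa>\<^sup>2 * \<psi> k * \<psi> (Suc k mod n)) * l0) =
             - (\<Sum>k<n. \<psi> k * (dlap l0 n \<psi> k + \<kappa>\<^sup>2 * \<psi> (Suc k mod n)) * l0))"
proof -
  obtain V A where D: "\<forall>k<n. \<forall>t\<in>{-\<epsilon><..<\<epsilon>}. ((\<lambda>s. P s k) has_vector_derivative V k t) (at t)
      \<and> (V k has_vector_derivative A k t) (at t)"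
    using assms(10) unfolding C2_family_def by metis
  have "0 \<in> {-\<epsilon><..<\<epsilon>}" using assms(8) by simp
  then have V0: "\<forall>k<n. V k 0 = \<psi> k *\<^sub>R vertex_normal \<sigma> p n k + \<eta> k *\<^sub>R vertex_tangent \<sigma> p n k"
    using D assms(13) vector_derivative_at by metis
  have first: "deriv (deriv (\<lambda>t. curve_length n (P t))) 0 =
           (\<Sum>k<n. ((dgrad l0 n \<psi> k)\<^sup>2 - \<kappa>\<^sup>2 * \<psi> k * \<psi> (Suc k mod n)
              + (tan (\<theta>0 / 2))\<^sup>2 * (\<kappa> * dgrad l0 n \<psi> k * (\<eta> (Suc k mod n) + \<eta> k)
                                     + (dgrad l0 n \<eta> k)\<^sup>2)) * l0)"
    using D \<open>0 \<in> _\<close> by (intro equiangular_length_second_variation[where V = "\<lambda>t k. V k t" and A = "\<lambda>k. A k 0",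
        OF assms(1-4,6-9) _ _ assms(11,12) V0]) auto
  have "0 < n"
    using assms(2) by (simp add: closed_curve_def)
  then have "l0 \<noteq> 0"
    using assms(3) edge_len_pos[OF assms(2)] by force
  show ?thesis
  proof (intro conjI impI)
    show "deriv (deriv (\<lambda>t. curve_length n (P t))) 0 =
             (\<Sum>k<n. ((dgrad l0 n \<psi> k)\<^sup>2 - \<kappa>\<^sup>2 * \<psi> k * \<psi> (Suc k mod n)) * l0)"
      if "\<forall>k<n. \<eta> k = 0"
      unfolding first using that by (intro sum.cong refl) (simp add: dgrad_def)
  qed (use first discrete_jacobi_form[OF \<open>l0 \<noteq> 0\<close>] in auto)
qed

end
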